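(* For every dynamical system $(S,g)$, the following are equivalent: (1) $(S,g)$ is timed; (2) for every $n\in\mathbb{N}\cup\{\infty\}$ and all $s,w\in S$, if $g(s)=g^{n+1}(w)$ then $s=g^n(w')$ for some $w'\in S$; (3) all maximal $g$-histories of the same state have the same length; (4) there exists an equivalence relation $=^\tau$ on $S$ satisfying the two synchronicity conditions: (i) $s=^\tau w$ iff $g(s)=^\tau g(w)$, and (ii) if $s=^\tau g(w)$ then $s=g(w')$ for some $w'\in S$.
   Context: A dynamical system is a pair $(S,g)$ with $g:S\to S$. A state $s$ is initial if $s\neq g(w)$ for all $w\in S$. A timing map is $\tau:S\to\mathbb{N}\cup\{\infty\}$ with (a) $\tau_s=0$ for every initial state $s$ and (b) $\tau_{g(s)}=\tau_s+1$ for all $s$ (with $\infty+1=\infty$); $(S,g)$ is timed if a timing map exists. A $g$-history of a state $s$ is a finite or infinite sequence $(s_0=s,s_1,s_2,\dots)$ with $s_n=g(s_{n+1})$ for all consecutive entries; its length is the number of states in it; it is maximal if it is infinite or cannot be extended to a $g$-history of greater length. *)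

theory Defs
  imports Main "HOL-Library.Extended_Nat"
begin

text \<open>A dynamical system is modelled by a map g :: 'a \<Rightarrow> 'a; the state space S is UNIV :: 'a set.\<close>

definition initial :: "('a \<Rightarrow> 'a) \<Rightarrow> 'a \<Rightarrow> bool" where
  "initial g s \<longleftrightarrow> (\<forall>w. s \<noteq> g w)"

definition timing_map :: "('a \<Rightarrow> 'a) \<Rightarrow> ('a \<Rightarrow> enat) \<Rightarrow> bool" where
  "timing_map g \<tau> \<longleftrightarrow> (\<forall>s. initial g s \<longrightarrow> \<tau> s = 0) \<and> (\<forall>s. \<tau> (g s) = \<tau> s + 1)"

definition timed :: "('a \<Rightarrow> 'a) \<Rightarrow> bool" where
  "timed g \<longleftrightarrow> (\<exists>\<tau>. timing_map g \<tau>)"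

text \<open>A g-history of s of length L (number of states, 1 \<le> L \<le> \<infinity>), given by the entries
  h 0, h 1, ... (only the entries h k with k < L are meaningful).\<close>
definition g_history :: "('a \<Rightarrow> 'a) \<Rightarrow> 'a \<Rightarrow> (nat \<Rightarrow> 'a) \<Rightarrow> enat \<Rightarrow> bool" where
  "g_history g s h L \<longleftrightarrow> 1 \<le> L \<and> h 0 = s \<and> (\<forall>k. enat (Suc k) < L \<longrightarrow> h k = g (h (Suc k)))"

definition maximal_history :: "('a \<Rightarrow> 'a) \<Rightarrow> 'a \<Rightarrow> (nat \<Rightarrow> 'a) \<Rightarrow> enat \<Rightarrow> bool" where
  "maximal_history g s h L \<longleftrightarrow> g_history g s h L \<and>
     (L = \<infinity> \<or> \<not> (\<exists>h' L'. g_history g s h' L' \<and> L < L' \<and> (\<forall>k. enat k < L \<longrightarrow> h' k = h k)))"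

text \<open>For n = \<infinity>,
  "x = g^\<infinity>(w)" is read as: x has an infinite g-history (the argument w plays no role).\<close>
definition gpow_eq :: "('a \<Rightarrow> 'a) \<Rightarrow> enat \<Rightarrow> 'a \<Rightarrow> 'a \<Rightarrow> bool" where
  "gpow_eq g n x w \<longleftrightarrow> (case n of
      enat m \<Rightarrow> x = (g ^^ m) w
    | \<infinity> \<Rightarrow> (\<exists>h. g_history g x h \<infinity>))"

end

theory Submission
  imports Defs
begin

text \<open>Walking back along a g-history lowers a timing map by one per step. A maximal history
  either ends in an initial state, where \<tau> = 0, or is infinite, which forces \<tau> = \<infinity>; so
  every maximal history of s has length \<tau> s + 1, and conversely a common maximal length,
  minus one, is a timing map. Conditions (2) and (4) each imply that g s = g^(m+1)(w) forces
  s into the range of g^m; this rules out maximal histories of different lengths, since the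
  shorter one ends in an initial state that a longer one would exhibit as an image of g.
  A timing map yields (4) through the relation \<tau> s = \<tau> w.\<close>

lemma g_history_funpow:
  assumes "g_history g s h L" "enat k < L"
  shows "s = (g ^^ k) (h k)"
  using assms(2)
proof (induction k)
  case 0
  then show ?case using assms(1) by (simp add: g_history_def)
next
  case (Suc k)
  then have "s = (g ^^ k) (h k)" by (cases L) auto
  moreover have "h k = g (h (Suc k))" using assms(1) Suc.prems by (simp add: g_history_def)
  ultimately show ?case by (simp add: funpow_swap1)
qed

lemma timing_map_step:
  "timing_map g \<tau> \<Longrightarrow> \<tau> (g s) = \<tau> s + 1"
  by (simp add: timing_map_def)

lemma timing_map_funpow:
  assumes "timing_map g \<tau>"
  shows "\<tau> ((g ^^ k) w) = \<tau> w + enat k"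
proof (induction k)
  case 0
  then show ?case by (simp add: zero_enat_def)
next
  case (Suc k)
  then show ?case
    using timing_map_step[OF assms] by (simp add: add.assoc one_enat_def)
qed

lemma timing_map_infinite_history:
  assumes "timing_map g \<tau>" "g_history g s h \<infinity>"
  shows "\<tau> s = \<infinity>"
proof (cases "\<tau> s")
  case (enat m)
  have "s = (g ^^ Suc m) (h (Suc m))" by (rule g_history_funpow[OF assms(2)]) simp
  then have "\<tau> s = \<tau> (h (Suc m)) + enat (Suc m)"
    using timing_map_funpow[OF assms(1), of "Suc m"] by simp
  then show ?thesis using enat by (cases "\<tau> (h (Suc m))") auto
qed

lemma maximal_history_finiteE:
  assumes "maximal_history g s h (enat n)"
  obtains m where "n = Suc m" "initial g (h m)"
proof -
  have hist: "g_history g s h (enat n)" using assms by (simp add: maximal_history_def)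
  then obtain m where m: "n = Suc m" by (cases n) (auto simp: g_history_def one_enat_def)
  have "initial g (h m)"
  proof (rule ccontr)
    assume "\<not> initial g (h m)"
    then obtain x where x: "h m = g x" by (auto simp: initial_def)
    have "g_history g s (h(Suc m := x)) (enat (Suc (Suc m)))"
      using hist x by (auto simp: g_history_def m one_enat_def less_Suc_eq)
    moreover have "\<forall>k. enat k < enat n \<longrightarrow> (h(Suc m := x)) k = h k" by (simp add: m)
    ultimately show False using assms unfolding maximal_history_def m by fastforce
  qed
  with m that show ?thesis by blast
qed

lemma maximal_historyI_initial:
  assumes "g_history g s h (enat (Suc m))" "initial g (h m)"
  shows "maximal_history g s h (enat (Suc m))"
proof -
  have False if "g_history g s h' L'" "enat (Suc m) < L'" "h' m = h m" for h' L'
  proof -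
    have "h' m = g (h' (Suc m))" using that(1,2) by (simp add: g_history_def)
    with that(3) assms(2) show False by (metis initial_def)
  qed
  then show ?thesis using assms(1) by (auto simp: maximal_history_def)
qed

lemma maximal_history_from_initial:
  assumes "initial g i"
  shows "maximal_history g ((g ^^ k) i) (\<lambda>j. (g ^^ (k - j)) i) (enat (Suc k))"
proof (rule maximal_historyI_initial)
  have "(g ^^ (k - j)) i = g ((g ^^ (k - Suc j)) i)" if "j < k" for j
  proof -
    have "k - j = Suc (k - Suc j)" using that by simp
    then show ?thesis by simp
  qed
  then show "g_history g ((g ^^ k) i) (\<lambda>j. (g ^^ (k - j)) i) (enat (Suc k))"
    by (simp add: g_history_def one_enat_def)
qed (use assms in simp)

lemma infinite_history_if_unreachable:
  assumes "\<And>k i. initial g i \<Longrightarrow> s \<noteq> (g ^^ k) i"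
  shows "\<exists>h. g_history g s h \<infinity>"
proof -
  define unreachable where "unreachable x \<longleftrightarrow> (\<forall>k i. initial g i \<longrightarrow> x \<noteq> (g ^^ k) i)" for x
  have "\<exists>y. x = g y \<and> unreachable y" if "unreachable x" for x
  proof -
    have "\<not> initial g x" using that unfolding unreachable_def by (metis funpow_0)
    then obtain y where y: "x = g y" by (auto simp: initial_def)
    have "unreachable y"
      unfolding unreachable_def
    proof (intro allI impI notI)
      fix k i
      assume "initial g i" "y = (g ^^ k) i"
      then have "initial g i \<and> x = (g ^^ Suc k) i" using y by simp
      with that show False unfolding unreachable_def by blast
    qed
    with y show ?thesis by blast
  qed
  then obtain pred where pred: "\<And>x. unreachable x \<Longrightarrow> x = g (pred x) \<and> unreachable (pred x)"
    by metis
  have "unreachable ((pred ^^ k) s)" for k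
  proof (induction k)
    case 0
    then show ?case using assms by (simp add: unreachable_def)
  next
    case (Suc k)
    then show ?case using pred by simp
  qed
  then have "g_history g s (\<lambda>k. (pred ^^ k) s) \<infinity>"
    using pred by (simp add: g_history_def)
  then show ?thesis by blast
qed

lemma maximal_history_exists: "\<exists>h L. maximal_history g s h L"
proof (cases "\<exists>k i. initial g i \<and> s = (g ^^ k) i")
  case True
  then obtain k i where "initial g i" "s = (g ^^ k) i" by blast
  then show ?thesis using maximal_history_from_initial[of g i k] by blast
next
  case False
  then show ?thesis using infinite_history_if_unreachable[of g s]
    by (auto simp: maximal_history_def)
qed

lemma maximal_history_length_timing_map:
  assumes "timing_map g \<tau>" "maximal_history g s h L"
  shows "L = \<tau> s + 1"
proof (cases L)
  case (enat n)
  with assms(2) obtain m where m: "n = Suc m" "initial g (h m)" by (auto elim: maximal_history_finiteE)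
  have "s = (g ^^ m) (h m)"
    using assms(2) enat m by (intro g_history_funpow) (auto simp: maximal_history_def)
  moreover have "\<tau> (h m) = 0" using assms(1) m(2) by (simp add: timing_map_def)
  ultimately show ?thesis
    using timing_map_funpow[OF assms(1)] enat m by (simp add: one_enat_def)
next
  case infinity
  then show ?thesis
    using assms timing_map_infinite_history by (fastforce simp: maximal_history_def)
qed

lemma maximal_history_image:
  assumes "maximal_history g s h L"
  shows "maximal_history g (g s) (case_nat (g s) h) (L + 1)"
proof -
  have hist: "g_history g s h L" using assms by (simp add: maximal_history_def)
  have "case_nat (g s) h k = g (h k)" if "enat (Suc k) < L + 1" for k
  proof (cases k)
    case 0
    then show ?thesis using hist by (simp add: g_history_def)
  next
    case (Suc j)
    then have "enat (Suc j) < L" using that by (cases L) (auto simp: one_enat_def)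
    then show ?thesis using hist Suc by (simp add: g_history_def)
  qed
  then have hist': "g_history g (g s) (case_nat (g s) h) (L + 1)"
    by (simp add: g_history_def)
  show ?thesis
  proof (cases L)
    case (enat n)
    with assms obtain m where "n = Suc m" "initial g (h m)" by (auto elim: maximal_history_finiteE)
    then show ?thesis
      using maximal_historyI_initial[of g "g s" _ "Suc m"] hist' enat by (simp add: one_enat_def)
  next
    case infinity
    then show ?thesis using hist' by (simp add: maximal_history_def)
  qed
qed

lemma timed_if_maximal_history_length_unique:
  assumes unique: "\<And>s h1 L1 h2 L2. maximal_history g s h1 L1 \<Longrightarrow> maximal_history g s h2 L2 \<Longrightarrow> L1 = L2"
  shows "timed g"
proof -
  define len where "len s = (THE L. \<exists>h. maximal_history g s h L)" for s
  have len: "len s = L" if "maximal_history g s h L" for s h L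
    unfolding len_def using that unique by blast
  \<comment> \<open>states without initial ancestor get \<infinity> - 1 = \<infinity>\<close>
  have "timing_map g (\<lambda>s. len s - 1)"
    unfolding timing_map_def
  proof (intro conjI allI impI)
    fix s
    assume "initial g s"
    then have "maximal_history g s (\<lambda>_. s) 1"
      using maximal_history_from_initial[of g s 0] by (simp add: one_enat_def)
    then show "len s - 1 = 0" by (simp add: len)
  next
    fix s
    obtain h L where max: "maximal_history g s h L" using maximal_history_exists[of g s] by blast
    then have "L \<ge> 1" by (simp add: maximal_history_def g_history_def)
    then show "len (g s) - 1 = len s - 1 + 1"
      using len[OF max] len[OF maximal_history_image[OF max]]
      by (cases L) (auto simp: one_enat_def)
  qed
  then show ?thesis by (auto simp: timed_def)
qed

lemma timing_map_gpow_eq_Suc_cancel: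
  assumes "timing_map g \<tau>" "gpow_eq g (n + 1) (g s) w"
  shows "\<exists>w'. gpow_eq g n s w'"
proof -
  obtain h L where max: "maximal_history g s h L" using maximal_history_exists[of g s] by blast
  have L: "L = \<tau> s + 1" by (rule maximal_history_length_timing_map[OF assms(1) max])
  show ?thesis
  proof (cases n)
    case (enat m)
    then have "g s = (g ^^ Suc m) w" using assms(2) by (simp add: gpow_eq_def one_enat_def)
    then have "\<tau> s + 1 = \<tau> w + enat (Suc m)"
      by (metis timing_map_funpow[OF assms(1)] timing_map_step[OF assms(1)])
    then have "enat m < L" using L by (cases "\<tau> s"; cases "\<tau> w") auto
    then have "s = (g ^^ m) (h m)"
      using max by (intro g_history_funpow) (auto simp: maximal_history_def)
    then show ?thesis using enat by (auto simp: gpow_eq_def)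
  next
    case infinity
    then obtain h' where "g_history g (g s) h' \<infinity>" using assms(2) by (auto simp: gpow_eq_def)
    then have "\<tau> s + 1 = \<infinity>"
      using timing_map_infinite_history[OF assms(1)] timing_map_step[OF assms(1)] by metis
    then have "L = \<infinity>" using L by simp
    then show ?thesis using max infinity by (auto simp: maximal_history_def gpow_eq_def)
  qed
qed

definition depth_reflecting :: "('a \<Rightarrow> 'a) \<Rightarrow> bool" where
  "depth_reflecting g \<longleftrightarrow> (\<forall>m s w. g s = (g ^^ Suc m) w \<longrightarrow> (\<exists>w'. s = (g ^^ m) w'))"

lemma depth_reflecting_if_gpow_eq_Suc_cancel:
  assumes "\<forall>(n::enat) s w. gpow_eq g (n + 1) (g s) w \<longrightarrow> (\<exists>w'. gpow_eq g n s w')"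
  shows "depth_reflecting g"
proof -
  have "\<exists>w'. s = (g ^^ m) w'" if "g s = (g ^^ Suc m) w" for m s w
  proof -
    have "gpow_eq g (enat m + 1) (g s) w" using that by (simp add: gpow_eq_def one_enat_def)
    then obtain w' where "gpow_eq g (enat m) s w'" using assms by blast
    then show ?thesis by (auto simp: gpow_eq_def)
  qed
  then show ?thesis by (simp add: depth_reflecting_def)
qed

lemma depth_reflecting_initial:
  assumes "depth_reflecting g" "initial g i"
  shows "(g ^^ k) i \<noteq> (g ^^ Suc k) w"
proof (induction k arbitrary: w)
  case 0
  then show ?case using assms(2) by (simp add: initial_def)
next
  case (Suc k)
  show ?case
  proof
    assume "(g ^^ Suc k) i = (g ^^ Suc (Suc k)) w"
    then have "g ((g ^^ k) i) = (g ^^ Suc (Suc k)) w" by simp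
    then obtain w' where "(g ^^ k) i = (g ^^ Suc k) w'"
      using assms(1) unfolding depth_reflecting_def by blast
    with Suc.IH show False by blast
  qed
qed

lemma depth_reflecting_maximal_history_not_shorter:
  assumes "depth_reflecting g" "maximal_history g s h1 L1" "g_history g s h2 L2"
  shows "\<not> L1 < L2"
proof
  assume less: "L1 < L2"
  then obtain n where n: "L1 = enat n" by (cases L1) auto
  with assms(2) obtain m where m: "n = Suc m" "initial g (h1 m)"
    by (auto elim: maximal_history_finiteE)
  have "s = (g ^^ m) (h1 m)"
    using assms(2) n m by (intro g_history_funpow) (auto simp: maximal_history_def)
  moreover have "s = (g ^^ Suc m) (h2 (Suc m))"
    using assms(3) less n m by (intro g_history_funpow) auto
  ultimately show False using depth_reflecting_initial[OF assms(1) m(2)] by metis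
qed

lemma depth_reflecting_maximal_history_length_unique:
  assumes "depth_reflecting g" "maximal_history g s h1 L1" "maximal_history g s h2 L2"
  shows "L1 = L2"
  using depth_reflecting_maximal_history_not_shorter[OF assms(1,2)]
    depth_reflecting_maximal_history_not_shorter[OF assms(1,3)] assms(2,3)
  by (simp add: maximal_history_def) (meson not_less_iff_gr_or_eq)

definition synchronous :: "('a \<Rightarrow> 'a) \<Rightarrow> 'a rel \<Rightarrow> bool" where
  "synchronous g R \<longleftrightarrow> equiv UNIV R \<and> (\<forall>s w. (s, w) \<in> R \<longleftrightarrow> (g s, g w) \<in> R) \<and>
     (\<forall>s w. (s, g w) \<in> R \<longrightarrow> (\<exists>w'. s = g w'))"

lemma timing_map_synchronous:
  assumes "timing_map g \<tau>"
  shows "synchronous g {(s, w). \<tau> s = \<tau> w}"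
proof -
  have "\<tau> s = \<tau> w \<longleftrightarrow> \<tau> (g s) = \<tau> (g w)" for s w
    using timing_map_step[OF assms] by (cases "\<tau> s"; cases "\<tau> w") (auto simp: one_enat_def)
  moreover have "\<exists>w'. s = g w'" if "\<tau> s = \<tau> (g w)" for s w
  proof -
    have "\<tau> s \<noteq> 0" using that timing_map_step[OF assms] by simp
    then show ?thesis using assms by (auto simp: timing_map_def initial_def)
  qed
  ultimately show ?thesis
    by (auto simp: synchronous_def equiv_def refl_on_def sym_def trans_def)
qed

lemma synchronous_depth_reflecting:
  assumes "synchronous g R"
  shows "depth_reflecting g"
proof -
  have R_step: "(s, w) \<in> R \<longleftrightarrow> (g s, g w) \<in> R" for s w
    using assms by (simp add: synchronous_def)
  have in_range: "(s, (g ^^ n) w) \<in> R \<Longrightarrow> \<exists>w'. s = (g ^^ n) w'" for n s w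
  proof (induction n arbitrary: s)
    case (Suc n)
    then have "(s, g ((g ^^ n) w)) \<in> R" by simp
    then obtain v where v: "s = g v" using assms by (auto simp: synchronous_def)
    then have "(v, (g ^^ n) w) \<in> R" using Suc.prems R_step by simp
    with Suc.IH v show ?case by (metis funpow.simps(2) o_apply)
  qed auto
  have "(s, (g ^^ m) w) \<in> R" if "g s = (g ^^ Suc m) w" for m s w
  proof -
    have "(g s, g ((g ^^ m) w)) \<in> R"
      using that assms by (simp add: synchronous_def equiv_def refl_on_def)
    then show ?thesis using R_step by blast
  qed
  then show ?thesis unfolding depth_reflecting_def using in_range by blast
qed

theorem fact5p2:
  fixes g :: "'a \<Rightarrow> 'a"
  defines "C2 \<equiv> (\<forall>(n::enat) s w. gpow_eq g (n + 1) (g s) w \<longrightarrow> (\<exists>w'. gpow_eq g n s w'))"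
      and "C3 \<equiv> (\<forall>s h1 L1 h2 L2. maximal_history g s h1 L1 \<and> maximal_history g s h2 L2 \<longrightarrow> L1 = L2)"
      and "C4 \<equiv> (\<exists>R. equiv UNIV R \<and>
                  (\<forall>s w. (s, w) \<in> R \<longleftrightarrow> (g s, g w) \<in> R) \<and>
                  (\<forall>s w. (s, g w) \<in> R \<longrightarrow> (\<exists>w'. s = g w')))"
  shows "(timed g \<longleftrightarrow> C2) \<and> (timed g \<longleftrightarrow> C3) \<and> (timed g \<longleftrightarrow> C4)"
proof -
  have "C4 \<longleftrightarrow> (\<exists>R. synchronous g R)"
    by (simp add: C4_def synchronous_def)
  moreover have "timed g \<Longrightarrow> C2"
    unfolding C2_def timed_def by (auto dest: timing_map_gpow_eq_Suc_cancel)
  moreover have "C2 \<Longrightarrow> depth_reflecting g"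
    unfolding C2_def by (rule depth_reflecting_if_gpow_eq_Suc_cancel)
  moreover have "depth_reflecting g \<Longrightarrow> C3"
    unfolding C3_def by (metis depth_reflecting_maximal_history_length_unique)
  moreover have "C3 \<Longrightarrow> timed g"
    unfolding C3_def by (rule timed_if_maximal_history_length_unique) blast
  moreover have "timed g \<Longrightarrow> \<exists>R. synchronous g R"
    unfolding timed_def using timing_map_synchronous by blast
  ultimately show ?thesis using synchronous_depth_reflecting by blast
qed

end
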